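(* Let $1\le p\le2$, $\frac1r=\frac1p-\frac12$ (with $r=\infty$ if $p=2$, the $\ell_r$-sums then read as maxima), and $d,N\in\mathbb{N}$ with $d\le N$. (i) For every real $\xi=(\xi_S)_{S\subset[N]}$, \[ \frac1{\sqrt{1+N\log2}}\Big(\sum_{S\subset[N]}|\xi_S|^r\Big)^{1/r}\le2\sqrt2\,e^2\,\|M_\xi\colon\mathcal{B}_N\to\ell_p(\{S:S\subset[N]\})\|. \] (ii) For every real $\xi=(\xi_S)_{S\subset[N],|S|\le d}$, \[ \frac1{\sqrt{1+N\log(1+20d)}}\Big(\sum_{S\subset[N],|S|\le d}|\xi_S|^r\Big)^{1/r}\le2\sqrt2\,e^2(1+\sqrt2)^d\,\|M_\xi\colon\mathcal{B}_N^{\le d}\to\ell_p(\{S\subset[N]:|S|\le d\})\|, \] and for every real $\xi=(\xi_S)_{S\subset[N],|S|=d}$, \[ \frac1{\sqrt{1+N\log(1+20d)}}\Big(\sum_{S\subset[N],|S|=d}|\xi_S|^r\Big)^{1/r}\le2\sqrt2\,e^2\,2^{d-1}\,\|M_\xi\colon\mathcal{B}_N^{=d}\to\ell_p(\{S\subset[N]:|S|=d\})\|. \]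
   Context: $[N]=\{1,\dots,N\}$. $\mathcal{B}_N$ is the space of all functions $f\colon\{-1,1\}^N\to\mathbb{R}$ with the sup norm; each has the Fourier–Walsh expansion $f(x)=\sum_{S\subset[N]}\widehat f(S)x^S$ with $x^S=\prod_{n\in S}x_n$ and $\widehat f(S)=2^{-N}\sum_{x}f(x)x^S$. $\mathcal{B}_N^{\le d}$ consists of those $f$ with $\widehat f(S)=0$ for $|S|>d$, and $\mathcal{B}_N^{=d}$ of those with $\widehat f(S)=0$ for $|S|\neq d$. $M_\xi f=(\xi_S\widehat f(S))_S$ over the relevant index set. $\log$ is natural. *)

theory Defs
  imports "HOL-Analysis.Analysis" "HOL-Library.FuncSet"
begin

definition cube :: "nat \<Rightarrow> (nat \<Rightarrow> real) set" where
  "cube N = PiE {1..N} (\<lambda>_. {-1, 1})"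

definition walsh :: "nat set \<Rightarrow> (nat \<Rightarrow> real) \<Rightarrow> real" where
  "walsh S x = (\<Prod>n\<in>S. x n)"

definition fourier :: "nat \<Rightarrow> ((nat \<Rightarrow> real) \<Rightarrow> real) \<Rightarrow> nat set \<Rightarrow> real" where
  "fourier N f S = (\<Sum>x\<in>cube N. f x * walsh S x) / 2 ^ N"

definition supnorm :: "nat \<Rightarrow> ((nat \<Rightarrow> real) \<Rightarrow> real) \<Rightarrow> real" where
  "supnorm N f = Max ((\<lambda>x. \<bar>f x\<bar>) ` cube N)"

definition deg_le :: "nat \<Rightarrow> nat \<Rightarrow> ((nat \<Rightarrow> real) \<Rightarrow> real) \<Rightarrow> bool" where
  "deg_le N d f \<longleftrightarrow> (\<forall>S. S \<subseteq> {1..N} \<and> card S > d \<longrightarrow> fourier N f S = 0)"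

definition homog :: "nat \<Rightarrow> nat \<Rightarrow> ((nat \<Rightarrow> real) \<Rightarrow> real) \<Rightarrow> bool" where
  "homog N d f \<longleftrightarrow> (\<forall>S. S \<subseteq> {1..N} \<and> card S \<noteq> d \<longrightarrow> fourier N f S = 0)"

definition lp_norm :: "real \<Rightarrow> nat set set \<Rightarrow> (nat set \<Rightarrow> real) \<Rightarrow> real" where
  "lp_norm p I a = (\<Sum>S\<in>I. \<bar>a S\<bar> powr p) powr (1 / p)"

definition lr_norm :: "real \<Rightarrow> nat set set \<Rightarrow> (nat set \<Rightarrow> real) \<Rightarrow> real" where
  "lr_norm p I a = (if p = 2 then Max ((\<lambda>S. \<bar>a S\<bar>) ` I)
                    else lp_norm (1 / (1 / p - 1 / 2)) I a)"

text \<open>Operator norm of the multiplier M_xi f = (xi_S fhat(S))_{S in I} from the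
  subspace {f. F f} of B_N (sup norm) into ell_p(I).\<close>
definition mult_norm ::
  "nat \<Rightarrow> (((nat \<Rightarrow> real) \<Rightarrow> real) \<Rightarrow> bool) \<Rightarrow> nat set set \<Rightarrow> real \<Rightarrow> (nat set \<Rightarrow> real) \<Rightarrow> real" where
  "mult_norm N F I p \<xi> =
     Sup {lp_norm p I (\<lambda>S. \<xi> S * fourier N f S) | f. F f \<and> supnorm N f \<le> 1}"

end

theory Submission
  imports Defs "HOL-Probability.Hoeffding"
begin

(* Test the multiplier on Walsh polynomials with random signs. For c_S = |xi_S|^(r/2) and
   f = sum_S e_S c_S x^S, the bound cosh t <= exp (t^2/2) makes each value f(x) subgaussian
   with variance sum_S c_S^2, so averaging over all sign vectors e and taking a union bound
   over the 2^N points of the cube gives signs with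
   ||f||_oo <= sqrt (2 (N+1) log 2) (sum_S c_S^2)^(1/2).
   Since p + r p/2 = r, the l_p-norm of (xi_S fhat(S))_S is then (sum_S |xi_S|^r)^(1/r)
   times the normalising factor, whence ||xi||_r <= sqrt (2 (N+1) log 2) ||M_xi||. This
   implies all three estimates; for d = 0 the spectrum is {{}} and they are trivial. *)

lemma cosh_le_exp_half_square:
  fixes x :: real
  shows "cosh x \<le> exp (x\<^sup>2 / 2)"
proof -
  have "ln (cosh u) \<le> u\<^sup>2 / 2" if "u \<ge> 0" for u :: real
  proof -
    \<comment> \<open>Hoeffding's lemma for a fair coin, at \<open>h = 2 u\<close>\<close>
    have "-(2 * u) * (1 / 2) + ln (1 + 1 / 2 * (exp (2 * u) - 1)) \<le> (2 * u)\<^sup>2 / 8"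
      by (rule Hoeffdings_lemma_aux) (use that in simp_all)
    moreover have "1 + 1 / 2 * (exp (2 * u) - 1) = exp u * cosh u"
      by (simp add: cosh_def field_simps flip: exp_add)
    ultimately show ?thesis
      by (simp add: ln_mult power2_eq_square)
  qed
  from this[of "\<bar>x\<bar>"] have "ln (cosh x) \<le> x\<^sup>2 / 2"
    by (cases "x \<ge> 0") simp_all
  then show ?thesis
    by (metis cosh_real_pos exp_le_cancel_iff exp_ln)
qed

lemma finite_cube [simp]: "finite (cube N)"
  by (simp add: cube_def finite_PiE)

lemma card_cube: "card (cube N) = 2 ^ N"
  by (simp add: cube_def card_PiE numeral_2_eq_2)

lemma cube_nonempty: "cube N \<noteq> {}"
  using card_cube[of N] by auto

lemma abs_walsh:
  assumes "x \<in> cube N" and "S \<subseteq> {1..N}"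
  shows "\<bar>walsh S x\<bar> = 1"
proof -
  have "x n \<in> {-1, 1}" if "n \<in> S" for n
    using assms that by (auto simp: cube_def PiE_iff)
  then have "\<bar>x n\<bar> = 1" if "n \<in> S" for n
    using that by force
  then show ?thesis
    by (simp add: walsh_def abs_prod)
qed

lemma walsh_orthogonal:
  assumes S: "S \<subseteq> {1..N}" and T: "T \<subseteq> {1..N}"
  shows "(\<Sum>x\<in>cube N. walsh S x * walsh T x) = (if S = T then 2 ^ N else 0)"
proof -
  define g where "g n v = (if n \<in> S then v else 1) * (if n \<in> T then v else 1)" for n and v :: real
  have walsh_eq: "walsh U x = (\<Prod>n\<in>{1..N}. if n \<in> U then x n else 1)" if "U \<subseteq> {1..N}" for U x
    using that by (simp add: walsh_def prod.If_cases Int_absorb1)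
  have "(\<Sum>x\<in>cube N. walsh S x * walsh T x) = (\<Sum>x\<in>cube N. \<Prod>n\<in>{1..N}. g n (x n))"
    by (simp add: walsh_eq[OF S] walsh_eq[OF T] g_def prod.distrib)
  also have "\<dots> = (\<Prod>n\<in>{1..N}. \<Sum>v\<in>{-1, 1}. g n v)"
    unfolding cube_def by (rule prod_sum_PiE[symmetric]) auto
  also have "\<dots> = (\<Prod>n\<in>{1..N}. if (n \<in> S) = (n \<in> T) then 2 else 0)"
    by (intro prod.cong) (auto simp: g_def)
  also have "\<dots> = (if S = T then 2 ^ N else 0)"
  proof (cases "S = T")
    case False
    then obtain n where "n \<in> {1..N}" "(n \<in> S) \<noteq> (n \<in> T)"
      using S T by blast
    then have "(\<Prod>n\<in>{1..N}. if (n \<in> S) = (n \<in> T) then 2 else 0) = (0::real)"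
      by (intro prod_zero) auto
    then show ?thesis
      using False by simp
  qed simp
  finally show ?thesis .
qed

definition walsh_poly :: "nat set set \<Rightarrow> (nat set \<Rightarrow> real) \<Rightarrow> (nat \<Rightarrow> real) \<Rightarrow> real" where
  "walsh_poly I a x = (\<Sum>S\<in>I. a S * walsh S x)"

lemma fourier_walsh_poly:
  assumes I: "I \<subseteq> Pow {1..N}" and S: "S \<subseteq> {1..N}"
  shows "fourier N (walsh_poly I a) S = (if S \<in> I then a S else 0)"
proof -
  have fin: "finite I"
    using I finite_subset by blast
  have "(\<Sum>x\<in>cube N. walsh_poly I a x * walsh S x)
      = (\<Sum>T\<in>I. a T * (\<Sum>x\<in>cube N. walsh T x * walsh S x))"
    by (simp add: walsh_poly_def sum_distrib_left sum_distrib_right sum.swap[of _ "cube N"] mult.assoc)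
  also have "\<dots> = (\<Sum>T\<in>I. if T = S then a T * 2 ^ N else 0)"
  proof (rule sum.cong)
    fix T
    assume "T \<in> I"
    then have "T \<subseteq> {1..N}"
      using I by blast
    then show "a T * (\<Sum>x\<in>cube N. walsh T x * walsh S x) = (if T = S then a T * 2 ^ N else 0)"
      by (simp add: walsh_orthogonal[OF _ S])
  qed simp
  also have "\<dots> = (if S \<in> I then a S * 2 ^ N else 0)"
    using fin by simp
  finally show ?thesis
    by (simp add: fourier_def)
qed

lemma abs_le_supnorm: "x \<in> cube N \<Longrightarrow> \<bar>f x\<bar> \<le> supnorm N f"
  unfolding supnorm_def by (rule Max_ge) auto

lemma supnorm_le: "(\<And>x. x \<in> cube N \<Longrightarrow> \<bar>f x\<bar> \<le> B) \<Longrightarrow> supnorm N f \<le> B"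
  unfolding supnorm_def using cube_nonempty by (subst Max_le_iff) auto

lemma abs_fourier_le_supnorm:
  assumes "S \<subseteq> {1..N}"
  shows "\<bar>fourier N f S\<bar> \<le> supnorm N f"
proof -
  have "\<bar>\<Sum>x\<in>cube N. f x * walsh S x\<bar> \<le> (\<Sum>x\<in>cube N. \<bar>f x * walsh S x\<bar>)"
    by (rule sum_abs)
  also have "\<dots> \<le> (\<Sum>x\<in>cube N. supnorm N f)"
    by (rule sum_mono) (simp add: abs_mult abs_walsh[OF _ assms] abs_le_supnorm)
  also have "\<dots> = 2 ^ N * supnorm N f"
    by (simp add: card_cube)
  finally show ?thesis
    by (simp add: fourier_def field_simps)
qed

lemma deg_le_walsh_poly:
  assumes "I \<subseteq> {S. S \<subseteq> {1..N} \<and> card S \<le> d}"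
  shows "deg_le N d (walsh_poly I a)"
proof -
  have "I \<subseteq> Pow {1..N}"
    using assms by blast
  then show ?thesis
    using assms by (auto simp: deg_le_def fourier_walsh_poly)
qed

lemma homog_walsh_poly:
  assumes "I \<subseteq> {S. S \<subseteq> {1..N} \<and> card S = d}"
  shows "homog N d (walsh_poly I a)"
proof -
  have "I \<subseteq> Pow {1..N}"
    using assms by blast
  then show ?thesis
    using assms by (auto simp: homog_def fourier_walsh_poly)
qed

lemma sum_signs_exp_le:
  fixes a :: "'i \<Rightarrow> real"
  assumes "finite I"
  shows "(\<Sum>e\<in>PiE I (\<lambda>_. {-1, 1}). exp (\<Sum>i\<in>I. e i * a i))
         \<le> 2 ^ card I * exp ((\<Sum>i\<in>I. (a i)\<^sup>2) / 2)"
proof -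
  have "(\<Sum>e\<in>PiE I (\<lambda>_. {-1, 1}). exp (\<Sum>i\<in>I. e i * a i))
      = (\<Sum>e\<in>PiE I (\<lambda>_. {-1, 1}). \<Prod>i\<in>I. exp (e i * a i))"
    using assms by (simp add: exp_sum)
  also have "\<dots> = (\<Prod>i\<in>I. \<Sum>v\<in>{-1, 1}. exp (v * a i))"
    using assms by (rule prod_sum_PiE[symmetric]) simp
  also have "\<dots> = (\<Prod>i\<in>I. 2 * cosh (a i))"
    by (intro prod.cong) (simp_all add: cosh_field_def)
  also have "\<dots> \<le> (\<Prod>i\<in>I. 2 * exp ((a i)\<^sup>2 / 2))"
    by (intro prod_mono) (simp add: cosh_le_exp_half_square)
  also have "\<dots> = 2 ^ card I * exp ((\<Sum>i\<in>I. (a i)\<^sup>2) / 2)"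
    using assms by (simp add: prod.distrib exp_sum sum_divide_distrib)
  finally show ?thesis .
qed

lemma exists_le_of_sum_le_card_mult:
  fixes G :: "'a \<Rightarrow> real" and B :: real
  assumes "finite E" and "E \<noteq> {}" and "sum G E \<le> card E * B"
  shows "\<exists>e\<in>E. G e \<le> B"
proof (rule ccontr)
  assume "\<not> ?thesis"
  then have "(\<Sum>e\<in>E. B) < sum G E"
    using assms(1,2) by (intro sum_strict_mono) auto
  then show False
    using assms(3) by simp
qed

lemma sum_signs_exp_plus_exp_minus_le:
  fixes c w :: "'i \<Rightarrow> real"
  assumes I: "finite I" and w: "\<And>i. i \<in> I \<Longrightarrow> \<bar>w i\<bar> \<le> 1"
  defines "h e \<equiv> \<Sum>i\<in>I. e i * c i * w i"
  shows "(\<Sum>e\<in>PiE I (\<lambda>_. {-1, 1}). exp (l * h e) + exp (- l * h e))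
         \<le> 2 * 2 ^ card I * exp (l\<^sup>2 * (\<Sum>i\<in>I. (c i)\<^sup>2) / 2)"
proof -
  have mgf: "(\<Sum>e\<in>PiE I (\<lambda>_. {-1, 1}). exp (m * h e)) \<le> 2 ^ card I * exp (l\<^sup>2 * (\<Sum>i\<in>I. (c i)\<^sup>2) / 2)"
    if "m\<^sup>2 = l\<^sup>2" for m
  proof -
    have "(\<Sum>e\<in>PiE I (\<lambda>_. {-1, 1}). exp (m * h e))
        = (\<Sum>e\<in>PiE I (\<lambda>_. {-1, 1}). exp (\<Sum>i\<in>I. e i * (m * c i * w i)))"
      by (simp add: h_def sum_distrib_left mult_ac)
    also have "\<dots> \<le> 2 ^ card I * exp ((\<Sum>i\<in>I. (m * c i * w i)\<^sup>2) / 2)"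
      using I by (rule sum_signs_exp_le)
    also have "(\<Sum>i\<in>I. (m * c i * w i)\<^sup>2) \<le> (\<Sum>i\<in>I. m\<^sup>2 * (c i)\<^sup>2)"
    proof (rule sum_mono)
      fix i
      assume "i \<in> I"
      then have "(w i)\<^sup>2 \<le> 1"
        using w by (simp add: abs_square_le_1)
      then show "(m * c i * w i)\<^sup>2 \<le> m\<^sup>2 * (c i)\<^sup>2"
        by (simp add: power_mult_distrib mult_left_le)
    qed
    finally show ?thesis
      using that by (simp add: sum_distrib_left)
  qed
  show ?thesis
    using mgf[of l] mgf[of "- l"] by (simp add: sum.distrib)
qed

lemma exists_signs_sum_le:
  fixes c :: "'i \<Rightarrow> real" and w :: "'i \<Rightarrow> 'a \<Rightarrow> real"
  assumes I: "finite I" and X: "finite X" "X \<noteq> {}"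
    and w: "\<And>i x. i \<in> I \<Longrightarrow> x \<in> X \<Longrightarrow> \<bar>w i x\<bar> \<le> 1"
    and c: "0 < (\<Sum>i\<in>I. (c i)\<^sup>2)"
  shows "\<exists>e\<in>PiE I (\<lambda>_. {-1, 1}). \<forall>x\<in>X.
           \<bar>\<Sum>i\<in>I. e i * c i * w i x\<bar> \<le> sqrt (2 * (\<Sum>i\<in>I. (c i)\<^sup>2) * ln (2 * card X))"
proof -
  define s where "s = (\<Sum>i\<in>I. (c i)\<^sup>2)"
  define L where "L = ln (2 * card X)"
  define l where "l = sqrt (2 * L / s)"
  define E where "E = PiE I (\<lambda>_. {-1, 1 :: real})"
  define h where "h e x = (\<Sum>i\<in>I. e i * c i * w i x)" for e x
  define G where "G e = (\<Sum>x\<in>X. exp (l * h e x) + exp (- l * h e x))" for e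
  have s: "0 < s"
    using c by (simp add: s_def)
  have "1 \<le> card X"
    using X by (simp add: Suc_le_eq card_gt_0_iff)
  then have L: "0 < L" and exp_L: "exp L = 2 * card X"
    by (simp_all add: L_def)
  have l: "0 < l" "l\<^sup>2 * s / 2 = L"
    using s L by (simp_all add: l_def)
  have finE: "finite E" and cardE: "card E = 2 ^ card I" and E_ne: "E \<noteq> {}"
    using I by (auto simp: E_def card_PiE finite_PiE PiE_eq_empty_iff numeral_2_eq_2)
  have "sum G E = (\<Sum>x\<in>X. \<Sum>e\<in>E. exp (l * h e x) + exp (- l * h e x))"
    unfolding G_def by (rule sum.swap)
  also have "\<dots> \<le> (\<Sum>x\<in>X. 2 * real (card E) * exp L)"
  proof (rule sum_mono)
    fix x
    assume "x \<in> X"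
    then have "(\<Sum>e\<in>E. exp (l * h e x) + exp (- l * h e x)) \<le> 2 * 2 ^ card I * exp (l\<^sup>2 * s / 2)"
      unfolding E_def h_def s_def using I w by (intro sum_signs_exp_plus_exp_minus_le) auto
    then show "(\<Sum>e\<in>E. exp (l * h e x) + exp (- l * h e x)) \<le> 2 * real (card E) * exp L"
      by (simp add: l(2) cardE)
  qed
  also have "\<dots> = card E * (2 * card X * exp L)"
    by simp
  \<comment> \<open>\<open>G e\<close> dominates \<open>exp (l * \<bar>h e x\<bar>)\<close> at every point, and \<open>l\<close> optimises the Chernoff bound\<close>
  finally obtain e where e: "e \<in> E" "G e \<le> 2 * card X * exp L"
    using exists_le_of_sum_le_card_mult[OF finE E_ne] by blast
  have "\<bar>h e x\<bar> \<le> sqrt (2 * s * L)" if x: "x \<in> X" for x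
  proof -
    have "exp (l * \<bar>h e x\<bar>) \<le> exp (l * h e x) + exp (- l * h e x)"
      by (cases "h e x \<ge> 0") (simp_all add: add_increasing add_increasing2)
    also have "\<dots> \<le> G e"
      unfolding G_def by (rule member_le_sum[OF x]) (simp_all add: X)
    also have "\<dots> \<le> exp L * exp L"
      using e by (simp add: exp_L)
    finally have "l * \<bar>h e x\<bar> \<le> 2 * L"
      by (simp flip: exp_add)
    also have "2 * L = sqrt ((2 * L)\<^sup>2)"
      using L by (subst real_sqrt_abs) simp
    also have "\<dots> = l * sqrt (2 * s * L)"
      using s by (simp add: l_def real_sqrt_mult[symmetric] power2_eq_square)
    finally show ?thesis
      using l by simp
  qed
  then show ?thesis
    using e unfolding E_def h_def s_def L_def by blast
qed

lemma walsh_poly_zero [simp]: "walsh_poly I (\<lambda>_. 0) = (\<lambda>_. 0)"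
  by (simp add: walsh_poly_def fun_eq_iff)

lemma lp_norm_nonneg: "0 \<le> lp_norm p I a"
  by (simp add: lp_norm_def)

lemma lp_norm_le_mult_norm:
  assumes p: "0 < p" and I: "I \<subseteq> Pow {1..N}" and f: "F f" "supnorm N f \<le> 1"
  shows "lp_norm p I (\<lambda>S. \<xi> S * fourier N f S) \<le> mult_norm N F I p \<xi>"
  unfolding mult_norm_def
proof (rule cSup_upper)
  show "lp_norm p I (\<lambda>S. \<xi> S * fourier N f S)
        \<in> {lp_norm p I (\<lambda>S. \<xi> S * fourier N f S) |f. F f \<and> supnorm N f \<le> 1}"
    using f by blast
  have "lp_norm p I (\<lambda>S. \<xi> S * fourier N g S) \<le> lp_norm p I \<xi>" if "supnorm N g \<le> 1" for g
  proof -
    have "\<bar>\<xi> S * fourier N g S\<bar> powr p \<le> \<bar>\<xi> S\<bar> powr p" if "S \<in> I" for S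
    proof -
      have "\<bar>fourier N g S\<bar> \<le> 1"
        using abs_fourier_le_supnorm[of S N g] I \<open>S \<in> I\<close> \<open>supnorm N g \<le> 1\<close> by auto
      then show ?thesis
        using p by (intro powr_mono2) (auto simp: abs_mult mult_left_le)
    qed
    then have "(\<Sum>S\<in>I. \<bar>\<xi> S * fourier N g S\<bar> powr p) \<le> (\<Sum>S\<in>I. \<bar>\<xi> S\<bar> powr p)"
      by (rule sum_mono)
    then show ?thesis
      unfolding lp_norm_def using p by (simp add: powr_mono2 sum_nonneg)
  qed
  then show "bdd_above {lp_norm p I (\<lambda>S. \<xi> S * fourier N f S) |f. F f \<and> supnorm N f \<le> 1}"
    by (intro bdd_aboveI[where M = "lp_norm p I \<xi>"]) blast
qed

lemma mult_norm_nonneg: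
  assumes "0 < p" and "I \<subseteq> Pow {1..N}" and "F (\<lambda>_. 0)"
  shows "0 \<le> mult_norm N F I p \<xi>"
proof -
  have "supnorm N (\<lambda>_. 0) \<le> 1"
    by (rule supnorm_le) simp
  then show ?thesis
    using lp_norm_le_mult_norm[of p I N F "\<lambda>_. 0"] assms lp_norm_nonneg order_trans by blast
qed

lemma abs_le_mult_norm:
  assumes p: "0 < p" and I: "I \<subseteq> Pow {1..N}" and T: "T \<in> I"
    and F: "\<And>a. F (walsh_poly I a)"
  shows "\<bar>\<xi> T\<bar> \<le> mult_norm N F I p \<xi>"
proof -
  define f where "f = walsh_poly I (\<lambda>S. of_bool (S = T))"
  have fin: "finite I"
    using I finite_subset by blast
  have "supnorm N f \<le> 1"
  proof (rule supnorm_le)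
    fix x
    assume "x \<in> cube N"
    then show "\<bar>f x\<bar> \<le> 1"
      using fin T I abs_walsh[of x N T] by (auto simp: f_def walsh_poly_def if_distrib cong: if_cong)
  qed
  then have le: "lp_norm p I (\<lambda>S. \<xi> S * fourier N f S) \<le> mult_norm N F I p \<xi>"
    using lp_norm_le_mult_norm[OF p I] F by (simp add: f_def)
  have "fourier N f S = of_bool (S = T)" if "S \<in> I" for S
  proof -
    have "S \<subseteq> {1..N}"
      using I that by blast
    then show ?thesis
      using that by (simp add: f_def fourier_walsh_poly[OF I])
  qed
  then have "(\<Sum>S\<in>I. \<bar>\<xi> S * fourier N f S\<bar> powr p) = (\<Sum>S\<in>I. if S = T then \<bar>\<xi> T\<bar> powr p else 0)"
    by (intro sum.cong) auto
  also have "\<dots> = \<bar>\<xi> T\<bar> powr p"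
    using fin T by simp
  finally show ?thesis
    using le p by (simp add: lp_norm_def powr_powr)
qed

lemma exists_signs_walsh_poly_le:
  assumes I: "I \<subseteq> Pow {1..N}" and c: "0 < (\<Sum>S\<in>I. (c S)\<^sup>2)"
  shows "\<exists>e\<in>PiE I (\<lambda>_. {-1, 1}). \<forall>x\<in>cube N.
           \<bar>walsh_poly I (\<lambda>S. e S * c S) x\<bar> \<le> sqrt (2 * (real N + 1) * ln 2) * sqrt (\<Sum>S\<in>I. (c S)\<^sup>2)"
proof -
  have fin: "finite I"
    using I finite_subset by blast
  have walsh_le: "\<bar>walsh S x\<bar> \<le> 1" if "S \<in> I" "x \<in> cube N" for S x
    using that I abs_walsh[of x N S] by (metis PowD order.refl subsetD)
  have "ln (2 * real (card (cube N))) = (real N + 1) * ln 2"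
    by (simp add: card_cube ln_realpow flip: power_Suc)
  then have bound_eq: "sqrt (2 * (\<Sum>S\<in>I. (c S)\<^sup>2) * ln (2 * card (cube N)))
      = sqrt (2 * (real N + 1) * ln 2) * sqrt (\<Sum>S\<in>I. (c S)\<^sup>2)"
    by (simp add: real_sqrt_mult[symmetric] mult_ac)
  have "\<exists>e\<in>PiE I (\<lambda>_. {-1, 1}). \<forall>x\<in>cube N.
      \<bar>\<Sum>S\<in>I. e S * c S * walsh S x\<bar> \<le> sqrt (2 * (\<Sum>S\<in>I. (c S)\<^sup>2) * ln (2 * card (cube N)))"
    by (rule exists_signs_sum_le[OF fin finite_cube cube_nonempty]) (use walsh_le c in auto)
  then show ?thesis
    unfolding walsh_poly_def bound_eq .
qed

lemma lp_norm_cong: "(\<And>S. S \<in> I \<Longrightarrow> a S = b S) \<Longrightarrow> lp_norm p I a = lp_norm p I b"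
  by (simp add: lp_norm_def)

lemma lp_norm_signed_powr:
  assumes p: "0 < p" and r: "p + r * p / 2 = r" and e: "\<And>S. S \<in> I \<Longrightarrow> \<bar>e S\<bar> = 1" and K: "0 < K"
  shows "lp_norm p I (\<lambda>S. \<xi> S * (e S * \<bar>\<xi> S\<bar> powr (r / 2) / K))
         = (\<Sum>S\<in>I. \<bar>\<xi> S\<bar> powr r) powr (1 / p) / K"
proof -
  have "\<bar>\<xi> S * (e S * \<bar>\<xi> S\<bar> powr (r / 2) / K)\<bar> powr p = \<bar>\<xi> S\<bar> powr r / K powr p"
    if "S \<in> I" for S
  proof -
    have "\<bar>\<xi> S * (e S * \<bar>\<xi> S\<bar> powr (r / 2) / K)\<bar> powr p
        = \<bar>\<xi> S\<bar> powr p * (\<bar>\<xi> S\<bar> powr (r / 2)) powr p / K powr p"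
      using e[OF that] K by (simp add: abs_mult powr_divide powr_mult)
    also have "\<dots> = \<bar>\<xi> S\<bar> powr r / K powr p"
      by (simp add: powr_powr r flip: powr_add)
    finally show ?thesis .
  qed
  then have "lp_norm p I (\<lambda>S. \<xi> S * (e S * \<bar>\<xi> S\<bar> powr (r / 2) / K))
      = ((\<Sum>S\<in>I. \<bar>\<xi> S\<bar> powr r) / K powr p) powr (1 / p)"
    by (simp add: lp_norm_def sum_divide_distrib)
  also have "\<dots> = (\<Sum>S\<in>I. \<bar>\<xi> S\<bar> powr r) powr (1 / p) / K"
    using p K by (simp add: powr_divide powr_powr)
  finally show ?thesis .
qed

lemma exists_unit_walsh_poly_lp_norm_eq:
  assumes I: "I \<subseteq> Pow {1..N}" and p: "0 < p" and r: "p + r * p / 2 = r"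
    and A: "0 < (\<Sum>S\<in>I. \<bar>\<xi> S\<bar> powr r)"
  shows "\<exists>a. supnorm N (walsh_poly I a) \<le> 1 \<and>
           lp_norm p I (\<lambda>S. \<xi> S * fourier N (walsh_poly I a) S)
           = (\<Sum>S\<in>I. \<bar>\<xi> S\<bar> powr r) powr (1 / p - 1 / 2) / sqrt (2 * (real N + 1) * ln 2)"
proof -
  define A where "A = (\<Sum>S\<in>I. \<bar>\<xi> S\<bar> powr r)"
  define t where "t = sqrt (2 * (real N + 1) * ln 2)"
  define c where "c S = \<bar>\<xi> S\<bar> powr (r / 2)" for S
  have A: "0 < A" and t: "0 < t"
    using A by (simp_all add: A_def t_def)
  have "(\<Sum>S\<in>I. (c S)\<^sup>2) = A"
    by (simp add: A_def c_def power2_eq_square flip: powr_add)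
  then obtain e where e: "e \<in> PiE I (\<lambda>_. {-1, 1})"
    and e_bound: "\<forall>x\<in>cube N. \<bar>walsh_poly I (\<lambda>S. e S * c S) x\<bar> \<le> t * sqrt A"
    using exists_signs_walsh_poly_le[OF I, of c] A by (auto simp: t_def)
  have e_abs: "\<bar>e S\<bar> = 1" if "S \<in> I" for S
    using e that by (auto simp: PiE_iff)
  define a where "a S = e S * c S / (t * sqrt A)" for S
  have "supnorm N (walsh_poly I a) \<le> 1"
  proof (rule supnorm_le)
    fix x
    assume "x \<in> cube N"
    then show "\<bar>walsh_poly I a x\<bar> \<le> 1"
      using e_bound t A by (simp add: a_def walsh_poly_def field_simps flip: sum_divide_distrib)
  qed
  moreover have "lp_norm p I (\<lambda>S. \<xi> S * fourier N (walsh_poly I a) S) = A powr (1 / p) / (t * sqrt A)"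
  proof -
    have "fourier N (walsh_poly I a) S = a S" if "S \<in> I" for S
      using that I by (subst fourier_walsh_poly[OF I]) auto
    then have "lp_norm p I (\<lambda>S. \<xi> S * fourier N (walsh_poly I a) S)
        = lp_norm p I (\<lambda>S. \<xi> S * (e S * \<bar>\<xi> S\<bar> powr (r / 2) / (t * sqrt A)))"
      by (intro lp_norm_cong) (simp add: a_def c_def)
    also have "\<dots> = A powr (1 / p) / (t * sqrt A)"
      using lp_norm_signed_powr[OF p r e_abs, where K = "t * sqrt A" and \<xi> = \<xi>] t A
      by (simp only: A_def mult_pos_pos real_sqrt_gt_zero simp_thms)
    finally show ?thesis .
  qed
  moreover have "A powr (1 / p) / (t * sqrt A) = A powr (1 / p - 1 / 2) / t"
    using A by (simp add: powr_diff powr_half_sqrt[symmetric])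
  ultimately show ?thesis
    unfolding A_def t_def by auto
qed

lemma lr_norm_le_mult_norm_of_less_2:
  assumes p: "1 \<le> p" "p < 2" and I: "I \<subseteq> Pow {1..N}" and F: "\<And>a. F (walsh_poly I a)"
  shows "lr_norm p I \<xi> \<le> sqrt (2 * (real N + 1) * ln 2) * mult_norm N F I p \<xi>"
proof -
  define q where "q = 1 / p - 1 / 2"
  define r where "r = 1 / q"
  define A where "A = (\<Sum>S\<in>I. \<bar>\<xi> S\<bar> powr r)"
  define t where "t = sqrt (2 * (real N + 1) * ln 2)"
  have "0 < p" "0 < q"
    using p by (simp_all add: q_def field_simps)
  then have r_eq: "p + r * p / 2 = r"
    by (simp add: r_def q_def field_simps)
  have t: "0 < t"
    by (simp add: t_def)
  have "A powr q \<le> t * mult_norm N F I p \<xi>"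
  proof (cases "A = 0")
    case True
    then show ?thesis
      using t mult_norm_nonneg[OF \<open>0 < p\<close> I] F[of "\<lambda>_. 0"] by simp
  next
    case False
    then have "0 < A"
      by (simp add: A_def order_le_neq_trans sum_nonneg)
    then obtain a where "supnorm N (walsh_poly I a) \<le> 1"
      and "lp_norm p I (\<lambda>S. \<xi> S * fourier N (walsh_poly I a) S) = A powr q / t"
      using exists_unit_walsh_poly_lp_norm_eq[OF I \<open>0 < p\<close> r_eq, of \<xi>]
      unfolding A_def q_def t_def by blast
    then have "A powr q / t \<le> mult_norm N F I p \<xi>"
      using lp_norm_le_mult_norm[OF \<open>0 < p\<close> I] F by metis
    then show ?thesis
      using t by (simp add: field_simps)
  qed
  moreover have "lr_norm p I \<xi> = A powr q"
    using p by (simp add: lr_norm_def lp_norm_def A_def r_def q_def)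
  ultimately show ?thesis
    by (simp add: t_def)
qed

lemma lr_norm_le_sqrt_log_mult_norm:
  assumes p: "1 \<le> p" "p \<le> 2" and I: "I \<subseteq> Pow {1..N}" "I \<noteq> {}"
    and F: "\<And>a. F (walsh_poly I a)" and L: "ln 2 \<le> L"
  shows "lr_norm p I \<xi> \<le> sqrt (2 * (1 + N * L)) * mult_norm N F I p \<xi>"
proof -
  have fin: "finite I"
    using I finite_subset by blast
  have M: "0 \<le> mult_norm N F I p \<xi>"
    using mult_norm_nonneg[of p I N F] p I F[of "\<lambda>_. 0"] by simp
  have "0 < ln (2 :: real)"
    by simp
  then have "0 \<le> L"
    using L by linarith
  moreover have "(real N + 1) * ln 2 \<le> 1 + N * L"
    using ln_2_less_1 mult_left_mono[OF L, of "real N"] by (simp add: algebra_simps)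
  ultimately have scale: "1 \<le> sqrt (2 * (1 + N * L))" "sqrt (2 * (real N + 1) * ln 2) \<le> sqrt (2 * (1 + N * L))"
    by (simp_all add: algebra_simps)
  show ?thesis
  proof (cases "p = 2")
    case True
    have "lr_norm p I \<xi> = Max ((\<lambda>S. \<bar>\<xi> S\<bar>) ` I)"
      using True by (simp add: lr_norm_def)
    also have "\<dots> \<le> mult_norm N F I p \<xi>"
      using fin I p abs_le_mult_norm[of p I N _ F] F by (subst Max_le_iff) auto
    also have "\<dots> \<le> sqrt (2 * (1 + N * L)) * mult_norm N F I p \<xi>"
      using scale(1) M by (simp add: mult_le_cancel_right1)
    finally show ?thesis .
  next
    case False
    then have "lr_norm p I \<xi> \<le> sqrt (2 * (real N + 1) * ln 2) * mult_norm N F I p \<xi>"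
      using p I F by (intro lr_norm_le_mult_norm_of_less_2) auto
    also have "\<dots> \<le> sqrt (2 * (1 + N * L)) * mult_norm N F I p \<xi>"
      using scale(2) M by (rule mult_right_mono)
    finally show ?thesis .
  qed
qed

lemma lr_norm_singleton:
  assumes "1 \<le> p" and "p \<le> 2"
  shows "lr_norm p {T} \<xi> = \<bar>\<xi> T\<bar>"
proof (cases "p = 2")
  case False
  then have "0 < 1 / p - 1 / 2"
    using assms by (simp add: field_simps)
  then show ?thesis
    using False by (simp add: lr_norm_def lp_norm_def powr_powr)
qed (simp add: lr_norm_def)

lemma lr_norm_le_degree_mult_norm:
  assumes p: "1 \<le> p" "p \<le> 2" and I: "I \<subseteq> {S. S \<subseteq> {1..N} \<and> card S \<le> d}" "I \<noteq> {}"
    and F: "\<And>a. F (walsh_poly I a)"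
  shows "lr_norm p I \<xi> \<le> sqrt (2 * (1 + N * ln (1 + 20 * real d))) * mult_norm N F I p \<xi>"
proof (cases "d = 0")
  case True
  have "S = {}" if "S \<in> I" for S
  proof -
    have "S \<subseteq> {1..N}" "card S = 0"
      using that I True by auto
    then show ?thesis
      by (metis card_0_eq finite_atLeastAtMost finite_subset)
  qed
  then have I_eq: "I = {{}}"
    using I(2) by blast
  have "lr_norm p I \<xi> \<le> mult_norm N F I p \<xi>"
    using abs_le_mult_norm[of p I N "{}" F \<xi>] F p by (simp add: I_eq lr_norm_singleton)
  moreover have "0 \<le> mult_norm N F I p \<xi>"
    using mult_norm_nonneg[of p I N F] p F[of "\<lambda>_. 0"] by (simp add: I_eq)
  ultimately show ?thesis
    using True by (simp add: mult_le_cancel_right1 order_trans)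
next
  case False
  then show ?thesis
    using p I F by (intro lr_norm_le_sqrt_log_mult_norm) auto
qed

lemma div_sqrt_le_const_mult:
  fixes x M Q k :: real
  assumes x: "x \<le> sqrt (2 * Q) * M" and M: "0 \<le> M" and Q: "1 \<le> Q" and k: "1 / 2 \<le> k"
  shows "x / sqrt Q \<le> 2 * sqrt 2 * exp 2 * k * M"
proof -
  have "x / sqrt Q \<le> sqrt 2 * M"
    using x Q by (simp add: divide_le_eq real_sqrt_mult mult_ac)
  also have "1 \<le> 2 * exp 2 * k"
    using k mult_mono[of 1 "exp 2" 1 "2 * k"] by simp
  then have "sqrt 2 * M \<le> 2 * sqrt 2 * exp 2 * k * M"
    using M mult_right_mono[of 1 "2 * exp 2 * k" "sqrt 2 * M"] by (simp add: mult_ac)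
  finally show ?thesis .
qed

theorem theorem6p7:
  fixes p :: real and d N :: nat
  assumes "1 \<le> p" and "p \<le> 2" and "d \<le> N"
  shows
    "(\<forall>\<xi> :: nat set \<Rightarrow> real.
       lr_norm p (Pow {1..N}) \<xi> / sqrt (1 + real N * ln 2)
       \<le> 2 * sqrt 2 * exp 2 * mult_norm N (\<lambda>f. True) (Pow {1..N}) p \<xi>)
   \<and> (\<forall>\<xi> :: nat set \<Rightarrow> real.
       lr_norm p {S. S \<subseteq> {1..N} \<and> card S \<le> d} \<xi> / sqrt (1 + real N * ln (1 + 20 * real d))
       \<le> 2 * sqrt 2 * exp 2 * (1 + sqrt 2) ^ d
          * mult_norm N (deg_le N d) {S. S \<subseteq> {1..N} \<and> card S \<le> d} p \<xi>)
   \<and> (\<forall>\<xi> :: nat set \<Rightarrow> real.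
       lr_norm p {S. S \<subseteq> {1..N} \<and> card S = d} \<xi> / sqrt (1 + real N * ln (1 + 20 * real d))
       \<le> 2 * sqrt 2 * exp 2 * 2 powr (real d - 1)
          * mult_norm N (homog N d) {S. S \<subseteq> {1..N} \<and> card S = d} p \<xi>)"
proof (intro conjI allI)
  fix \<xi> :: "nat set \<Rightarrow> real"
  have lr: "lr_norm p (Pow {1..N}) \<xi> \<le> sqrt (2 * (1 + N * ln 2)) * mult_norm N (\<lambda>f. True) (Pow {1..N}) p \<xi>"
    using assms by (intro lr_norm_le_sqrt_log_mult_norm) auto
  have M: "0 \<le> mult_norm N (\<lambda>f. True) (Pow {1..N}) p \<xi>"
    using assms by (intro mult_norm_nonneg) auto
  show "lr_norm p (Pow {1..N}) \<xi> / sqrt (1 + real N * ln 2)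
       \<le> 2 * sqrt 2 * exp 2 * mult_norm N (\<lambda>f. True) (Pow {1..N}) p \<xi>"
    using div_sqrt_le_const_mult[OF lr M, where k = 1] by simp
next
  fix \<xi> :: "nat set \<Rightarrow> real"
  let ?I = "{S. S \<subseteq> {1..N} \<and> card S \<le> d}"
  have lr: "lr_norm p ?I \<xi> \<le> sqrt (2 * (1 + N * ln (1 + 20 * real d))) * mult_norm N (deg_le N d) ?I p \<xi>"
    using assms by (intro lr_norm_le_degree_mult_norm deg_le_walsh_poly) auto
  have M: "0 \<le> mult_norm N (deg_le N d) ?I p \<xi>"
    using assms deg_le_walsh_poly[of ?I N d "\<lambda>_. 0"] by (intro mult_norm_nonneg) auto
  have "1 \<le> (1 + sqrt 2) ^ d"
    by simp
  then have k: "1 / 2 \<le> (1 + sqrt 2) ^ d"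
    by linarith
  show "lr_norm p ?I \<xi> / sqrt (1 + real N * ln (1 + 20 * real d))
       \<le> 2 * sqrt 2 * exp 2 * (1 + sqrt 2) ^ d * mult_norm N (deg_le N d) ?I p \<xi>"
    by (rule div_sqrt_le_const_mult[OF lr M _ k]) simp
next
  fix \<xi> :: "nat set \<Rightarrow> real"
  let ?I = "{S. S \<subseteq> {1..N} \<and> card S = d}"
  have "{1..d} \<in> ?I"
    using assms by auto
  then have ne: "?I \<noteq> {}"
    by blast
  have lr: "lr_norm p ?I \<xi> \<le> sqrt (2 * (1 + N * ln (1 + 20 * real d))) * mult_norm N (homog N d) ?I p \<xi>"
    using assms ne by (intro lr_norm_le_degree_mult_norm homog_walsh_poly) auto
  have M: "0 \<le> mult_norm N (homog N d) ?I p \<xi>"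
    using assms homog_walsh_poly[of ?I N d "\<lambda>_. 0"] by (intro mult_norm_nonneg) auto
  have k: "1 / 2 \<le> 2 powr (real d - 1)"
    using powr_mono[of "-1" "real d - 1" 2] by (simp add: powr_minus_divide)
  show "lr_norm p ?I \<xi> / sqrt (1 + real N * ln (1 + 20 * real d))
       \<le> 2 * sqrt 2 * exp 2 * 2 powr (real d - 1) * mult_norm N (homog N d) ?I p \<xi>"
    by (rule div_sqrt_le_const_mult[OF lr M _ k]) simp
qed

end
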